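(* Let $\lambda>0$ and $f(z)=z+\sum_{k=2}^{\infty}a_kz^k$ analytic in $\mathbb{D}=\{z:|z|<1\}$. If $\sum_{k=2}^{\infty}(k-1)|a_k|<\lambda$, then $f\in\Omega_\lambda$. Moreover, for every $f(z)=z+\sum_{k=2}^\infty a_kz^k\in\Omega_\lambda$, $|a_k|\le\frac{\lambda}{k-1}$ for all $k\ge2$.
   Context: $\Omega_\lambda$ denotes the set of functions $f$ analytic in $\mathbb{D}$ with $f(0)=0$, $f'(0)=1$, such that $zf'(z)-f(z)=\lambda z^2\phi(z)$ for some analytic $\phi$ on $\mathbb{D}$ with $|\phi(z)|\le1$. *)

theory Defs
  imports "HOL-Complex_Analysis.Complex_Analysis"
begin

definition Omega :: "real \<Rightarrow> (complex \<Rightarrow> complex) set" where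
  "Omega lam = {f. f holomorphic_on ball 0 1 \<and> f 0 = 0 \<and> deriv f 0 = 1 \<and>
     (\<exists>\<phi>. \<phi> holomorphic_on ball 0 1 \<and> (\<forall>z\<in>ball 0 1. norm (\<phi> z) \<le> 1) \<and>
        (\<forall>z\<in>ball 0 1. z * deriv f z - f z = complex_of_real lam * z^2 * \<phi> z))}"

end

theory Submission
  imports Defs
begin

text \<open>For \<open>f = \<Sum> a\<^sub>k z\<^sup>k\<close> one has \<open>z f' - f = \<Sum> (k - 1) a\<^sub>k z\<^sup>k\<close>,
  which equals \<open>z\<^sup>2 \<Sum> (k + 1) a\<^sub>k\<^sub>+\<^sub>2 z\<^sup>k\<close> once \<open>a\<^sub>0 = 0\<close>.
  If \<open>\<Sum> (k - 1) \<bar>a\<^sub>k\<bar> < \<lambda>\<close>, the second power series divided by \<open>\<lambda>\<close> is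
  a valid \<open>\<phi>\<close>. Conversely, comparing coefficients in \<open>z f' - f = \<lambda> z\<^sup>2 \<phi>\<close> gives
  \<open>(k - 1) a\<^sub>k = \<lambda> c\<^sub>k\<^sub>-\<^sub>2\<close>, where \<open>c\<^sub>j\<close> are the Taylor coefficients
  of \<open>\<phi>\<close>, and Cauchy's estimate for \<open>|\<phi>| \<le> 1\<close> gives \<open>|c\<^sub>j| \<le> 1\<close>.\<close>

lemma fps_X_mult_deriv_minus_nth:
  fixes A :: "'a :: comm_ring_1 fps"
  shows "(fps_X * fps_deriv A - A) $ n = (of_nat n - 1) * A $ n"
  by (cases n) (simp_all add: fps_X_mult_nth algebra_simps)

lemma fps_X_mult_deriv_minus_eq:
  fixes A :: "'a :: comm_ring_1 fps"
  assumes "A $ 0 = 0"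
  shows "fps_X * fps_deriv A - A = fps_X ^ 2 * Abs_fps (\<lambda>n. of_nat (n + 1) * A $ (n + 2))"
proof (rule fps_ext)
  fix n
  show "(fps_X * fps_deriv A - A) $ n = (fps_X ^ 2 * Abs_fps (\<lambda>n. of_nat (n + 1) * A $ (n + 2))) $ n"
  proof (cases "n < 2")
    case True
    then consider "n = 0" | "n = 1" by linarith
    then show ?thesis
      by cases (simp_all add: fps_X_mult_deriv_minus_nth fps_X_power_mult_nth assms)
  next
    case False
    then obtain m where "n = m + 2" by (metis add.commute le_Suc_ex not_less)
    then show ?thesis
      by (simp add: fps_X_mult_deriv_minus_nth fps_X_power_mult_nth algebra_simps)
  qed
qed

lemma norm_fps_expansion_nth_le:
  fixes \<phi> :: "complex \<Rightarrow> complex"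
  assumes hol: "\<phi> holomorphic_on ball 0 R" and bound: "\<And>z. z \<in> ball 0 R \<Longrightarrow> norm (\<phi> z) \<le> M"
    and "R > 0"
  shows "norm (fps_expansion \<phi> 0 $ n) \<le> M / R ^ n"
proof -
  have "norm ((deriv ^^ n) \<phi> 0) / fact n \<le> M / r ^ n" if r: "r \<in> {0<..<R}" for r
  proof -
    have "norm ((deriv ^^ n) \<phi> 0) \<le> fact n * M / r ^ n"
    proof (rule Cauchy_inequality)
      show "\<phi> holomorphic_on ball 0 r"
        by (rule holomorphic_on_subset[OF hol]) (use r in auto)
      show "continuous_on (cball 0 r) \<phi>"
        using r by (intro holomorphic_on_imp_continuous_on holomorphic_on_subset[OF hol]) auto
      show "norm (\<phi> z) \<le> M" if "norm (0 - z) = r" for z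
        using that r by (intro bound) auto
    qed (use r in auto)
    then show ?thesis
      by (simp add: divide_le_eq mult.commute)
  qed
  then have "eventually (\<lambda>r. norm ((deriv ^^ n) \<phi> 0) / fact n \<le> M / r ^ n) (at_left R)"
    using eventually_at_left_real[OF \<open>R > 0\<close>] by (auto elim!: eventually_mono)
  moreover have "((\<lambda>r. M / r ^ n) \<longlongrightarrow> M / R ^ n) (at_left R)"
    using \<open>R > 0\<close> by (intro tendsto_intros) auto
  ultimately have "norm ((deriv ^^ n) \<phi> 0) / fact n \<le> M / R ^ n"
    by (intro tendsto_le[OF trivial_limit_at_left_real _ tendsto_const])
  then show ?thesis
    by (simp add: fps_expansion_def norm_divide)
qed

lemma fps_conv_radius_ge_if_sums_on_ball:
  fixes a :: "nat \<Rightarrow> complex"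
  assumes "\<forall>z\<in>ball 0 R. (\<lambda>k. a k * z ^ k) sums f z"
  shows "fps_conv_radius (Abs_fps a) \<ge> R"
  unfolding fps_conv_radius_def fps_nth_Abs_fps
proof (rule conv_radius_geI_ex')
  fix r :: real assume "0 < r" "ereal r < ereal R"
  then have "complex_of_real r \<in> ball 0 R" by simp
  then show "summable (\<lambda>n. a n * complex_of_real r ^ n)"
    using assms sums_summable by blast
qed

lemma eval_fps_eq_if_sums_on_ball:
  fixes a :: "nat \<Rightarrow> complex"
  assumes "\<forall>z\<in>ball 0 R. (\<lambda>k. a k * z ^ k) sums f z" and "z \<in> ball 0 R"
  shows "eval_fps (Abs_fps a) z = f z"
proof -
  have "ereal (norm z) < fps_conv_radius (Abs_fps a)"
    using assms(2)
    by (intro less_le_trans[OF _ fps_conv_radius_ge_if_sums_on_ball[OF assms(1)]]) simp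
  from sums_eval_fps[OF this] have "(\<lambda>k. a k * z ^ k) sums eval_fps (Abs_fps a) z"
    by simp
  with assms show ?thesis by (blast intro: sums_unique2)
qed

lemma has_fps_expansion_if_sums_on_ball:
  fixes a :: "nat \<Rightarrow> complex"
  assumes "\<forall>z\<in>ball 0 R. (\<lambda>k. a k * z ^ k) sums f z" and "R > 0"
  shows "f has_fps_expansion Abs_fps a"
proof (rule has_fps_expansionI)
  have "eventually (\<lambda>z. z \<in> ball 0 R) (nhds 0)"
    using \<open>R > 0\<close> by (intro eventually_nhds_in_open) auto
  then show "eventually (\<lambda>z. (\<lambda>n. Abs_fps a $ n * z ^ n) sums f z) (nhds 0)"
    using assms(1) by (auto elim!: eventually_mono)
qed

lemma fps_conv_radius_ge_1_if_summable_norm: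
  fixes B :: "complex fps"
  assumes "summable (\<lambda>n. norm (B $ n))"
  shows "fps_conv_radius B \<ge> 1"
proof -
  have "summable (\<lambda>n. B $ n * 1 ^ n)"
    using summable_norm_cancel[OF assms] by simp
  from conv_radius_geI[OF this] show ?thesis
    by (simp add: fps_conv_radius_def one_ereal_def)
qed

lemma norm_eval_fps_le_suminf_norm:
  fixes B :: "complex fps"
  assumes "summable (\<lambda>n. norm (B $ n))" and "norm z \<le> 1"
  shows "norm (eval_fps B z) \<le> (\<Sum>n. norm (B $ n))"
  unfolding eval_fps_def
proof (rule norm_suminf_le[OF _ assms(1)])
  fix n
  have "norm (B $ n) * norm z ^ n \<le> norm (B $ n) * 1"
    using assms(2) by (intro mult_left_mono power_le_one) auto
  then show "norm (B $ n * z ^ n) \<le> norm (B $ n)"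
    by (simp add: norm_mult norm_power)
qed

lemma eval_fps_X_mult_deriv_minus:
  fixes A :: "complex fps"
  assumes radius: "ereal (norm z) < fps_conv_radius A"
  shows "eval_fps (fps_X * fps_deriv A - A) z = z * deriv (eval_fps A) z - eval_fps A z"
proof -
  have radius': "ereal (norm z) < fps_conv_radius (fps_deriv A)"
    using radius fps_conv_radius_deriv[of A] by (rule less_le_trans)
  then have "ereal (norm z) < fps_conv_radius (fps_X * fps_deriv A)"
    using fps_conv_radius_mult[of fps_X "fps_deriv A"] by simp
  with radius' show ?thesis
    using radius DERIV_imp_deriv[OF has_field_derivative_eval_fps[OF radius]]
    by (simp add: eval_fps_diff eval_fps_mult)
qed

lemma Omega_cong:
  assumes "\<And>z. z \<in> ball 0 1 \<Longrightarrow> f z = g z"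
  shows "f \<in> Omega lam \<longleftrightarrow> g \<in> Omega lam"
proof -
  have "deriv f z = deriv g z" if "z \<in> ball 0 1" for z
  proof (rule deriv_cong_ev)
    have "eventually (\<lambda>w. w \<in> ball 0 1) (nhds z)"
      using that by (intro eventually_nhds_in_open) auto
    then show "eventually (\<lambda>w. f w = g w) (nhds z)"
      by (auto elim!: eventually_mono simp: assms)
  qed simp
  moreover have "f holomorphic_on ball 0 1 \<longleftrightarrow> g holomorphic_on ball 0 1"
    using assms by (intro holomorphic_cong) auto
  ultimately show ?thesis
    unfolding Omega_def using assms by simp
qed

lemma eval_fps_in_Omega:
  fixes A :: "complex fps"
  assumes A0: "A $ 0 = 0" and A1: "A $ 1 = 1" and radius: "fps_conv_radius A \<ge> 1"
    and summable: "summable (\<lambda>k. (real (k + 2) - 1) * norm (A $ (k + 2)))"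
    and less: "(\<Sum>k. (real (k + 2) - 1) * norm (A $ (k + 2))) < lam"
  shows "eval_fps A \<in> Omega lam"
proof -
  define B where "B = Abs_fps (\<lambda>n. of_nat (n + 1) * A $ (n + 2))"
  have norm_B: "norm (B $ n) = (real (n + 2) - 1) * norm (A $ (n + 2))" for n
    unfolding B_def fps_nth_Abs_fps norm_mult norm_of_nat by simp
  have "0 \<le> (\<Sum>k. (real (k + 2) - 1) * norm (A $ (k + 2)))"
    by (intro suminf_nonneg summable) auto
  with less have lam: "lam > 0" by linarith
  have B_summable: "summable (\<lambda>n. norm (B $ n))"
    unfolding norm_B by (fact summable)
  have in_radius: "ereal (norm z) < R" if "z \<in> ball 0 1" "1 \<le> R" for z :: complex and R
    using that by (auto intro: less_le_trans[of _ 1])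
  note B_radius = fps_conv_radius_ge_1_if_summable_norm[OF B_summable]
  define \<phi> where "\<phi> = (\<lambda>z. eval_fps B z / complex_of_real lam)"
  have "\<phi> holomorphic_on ball 0 1"
    unfolding \<phi>_def using lam in_radius[OF _ B_radius] by (intro holomorphic_intros) auto
  moreover have "norm (\<phi> z) \<le> 1" if "z \<in> ball 0 1" for z
  proof -
    have "norm (eval_fps B z) \<le> (\<Sum>n. norm (B $ n))"
      using B_summable that by (intro norm_eval_fps_le_suminf_norm) auto
    with less lam show ?thesis
      unfolding norm_B by (simp add: \<phi>_def norm_divide)
  qed
  moreover have "z * deriv (eval_fps A) z - eval_fps A z = complex_of_real lam * z ^ 2 * \<phi> z"
    if "z \<in> ball 0 1" for z
  proof -
    have "z * deriv (eval_fps A) z - eval_fps A z = eval_fps (fps_X ^ 2 * B) z"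
      using eval_fps_X_mult_deriv_minus[OF in_radius[OF that radius]]
      unfolding B_def fps_X_mult_deriv_minus_eq[OF A0] by simp
    also have "\<dots> = z ^ 2 * eval_fps B z"
      using in_radius[OF that B_radius] by (simp add: eval_fps_mult)
    finally show ?thesis
      using lam by (simp add: \<phi>_def)
  qed
  moreover have "eval_fps A holomorphic_on ball 0 1"
    using in_radius[OF _ radius] by (intro holomorphic_on_eval_fps) auto
  moreover have "deriv (eval_fps A) 0 = 1"
    using A1 DERIV_imp_deriv[OF has_field_derivative_eval_fps[OF in_radius[OF _ radius]], of 0]
    by (simp add: eval_fps_at_0)
  ultimately show ?thesis
    unfolding Omega_def using A0 by (auto simp: eval_fps_at_0)
qed

lemma Omega_fps_nth_bound:
  assumes "f \<in> Omega lam" and "f has_fps_expansion A" and "k \<ge> 2"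
  shows "norm (A $ k) \<le> \<bar>lam\<bar> / (real k - 1)"
proof -
  from assms(1) obtain \<phi> where \<phi>_hol: "\<phi> holomorphic_on ball 0 1"
    and \<phi>_bound: "\<forall>z\<in>ball 0 1. norm (\<phi> z) \<le> 1"
    and \<phi>_eq: "\<forall>z\<in>ball 0 1. z * deriv f z - f z = complex_of_real lam * z ^ 2 * \<phi> z"
    unfolding Omega_def by blast
  define C where "C = fps_expansion \<phi> 0"
  have "(\<lambda>z. z * deriv f z - f z) has_fps_expansion fps_X * fps_deriv A - A"
    by (intro fps_expansion_intros assms(2))
  moreover have "(\<lambda>z. z * deriv f z - f z)
      has_fps_expansion fps_const (complex_of_real lam) * fps_X ^ 2 * C"
  proof -
    have "\<phi> has_fps_expansion C"
      unfolding C_def using \<phi>_hol by (intro has_fps_expansion_fps_expansion[of "ball 0 1"]) auto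
    then have "(\<lambda>z. complex_of_real lam * z ^ 2 * \<phi> z)
        has_fps_expansion fps_const (complex_of_real lam) * fps_X ^ 2 * C"
      by (intro fps_expansion_intros)
    moreover have "eventually (\<lambda>z. z \<in> ball 0 1) (nhds (0 :: complex))"
      by (intro eventually_nhds_in_open) auto
    ultimately show ?thesis
      using \<phi>_eq by (subst has_fps_expansion_cong[OF _ refl]) (auto elim!: eventually_mono)
  qed
  ultimately have "fps_X * fps_deriv A - A = fps_const (complex_of_real lam) * fps_X ^ 2 * C"
    by (rule fps_expansion_unique_complex)
  then have "(of_nat k - 1) * A $ k = complex_of_real lam * C $ (k - 2)"
    using \<open>k \<ge> 2\<close> fps_X_mult_deriv_minus_nth[of A k]
    by (simp add: mult.assoc fps_X_power_mult_nth)
  moreover have "norm (C $ (k - 2)) \<le> 1"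
    using norm_fps_expansion_nth_le[OF \<phi>_hol, of 1 "k - 2"] \<phi>_bound unfolding C_def by simp
  moreover have "norm (of_nat k - 1 :: complex) = real k - 1"
    using \<open>k \<ge> 2\<close> by (metis of_nat_1 of_nat_diff norm_of_nat one_le_numeral order.trans)
  ultimately have "(real k - 1) * norm (A $ k) \<le> \<bar>lam\<bar>"
    by (metis norm_mult norm_of_real mult_left_le abs_ge_zero)
  moreover have "real k - 1 > 0" using \<open>k \<ge> 2\<close> by simp
  ultimately show ?thesis by (simp add: pos_le_divide_eq mult.commute)
qed

theorem theorem4p6:
  fixes lam :: real
  assumes "lam > 0"
  shows "(\<forall>(f :: complex \<Rightarrow> complex) (a :: nat \<Rightarrow> complex).
            f holomorphic_on ball 0 1 \<longrightarrow> a 0 = 0 \<longrightarrow> a 1 = 1 \<longrightarrow>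
            (\<forall>z\<in>ball 0 1. (\<lambda>k. a k * z ^ k) sums f z) \<longrightarrow>
            summable (\<lambda>k. (real (k + 2) - 1) * norm (a (k + 2))) \<longrightarrow>
            (\<Sum>k. (real (k + 2) - 1) * norm (a (k + 2))) < lam \<longrightarrow>
            f \<in> Omega lam)
       \<and> (\<forall>(f :: complex \<Rightarrow> complex) (a :: nat \<Rightarrow> complex).
            f \<in> Omega lam \<longrightarrow> a 0 = 0 \<longrightarrow> a 1 = 1 \<longrightarrow>
            (\<forall>z\<in>ball 0 1. (\<lambda>k. a k * z ^ k) sums f z) \<longrightarrow>
            (\<forall>k\<ge>2. norm (a k) \<le> lam / (real k - 1)))"
proof (intro conjI allI impI)
  fix f :: "complex \<Rightarrow> complex" and a :: "nat \<Rightarrow> complex"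
  assume sums: "\<forall>z\<in>ball 0 1. (\<lambda>k. a k * z ^ k) sums f z"
    and "a 0 = 0" "a 1 = 1" "summable (\<lambda>k. (real (k + 2) - 1) * norm (a (k + 2)))"
    "(\<Sum>k. (real (k + 2) - 1) * norm (a (k + 2))) < lam"
  then have "eval_fps (Abs_fps a) \<in> Omega lam"
    using fps_conv_radius_ge_if_sums_on_ball[OF sums]
    by (intro eval_fps_in_Omega) (auto simp: one_ereal_def)
  with sums show "f \<in> Omega lam"
    using Omega_cong eval_fps_eq_if_sums_on_ball by blast
next
  fix f :: "complex \<Rightarrow> complex" and a :: "nat \<Rightarrow> complex" and k :: nat
  assume "f \<in> Omega lam" "\<forall>z\<in>ball 0 1. (\<lambda>k. a k * z ^ k) sums f z" "k \<ge> 2"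
  then have "norm (Abs_fps a $ k) \<le> \<bar>lam\<bar> / (real k - 1)"
    by (intro Omega_fps_nth_bound has_fps_expansion_if_sums_on_ball[of 1]) auto
  with \<open>lam > 0\<close> show "norm (a k) \<le> lam / (real k - 1)" by simp
qed

end
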